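(* Let $G=(X,b,m,c)$ be a weighted graph with $c\ge0$ and let $p\in[1,\infty)$. (a) For every $\varepsilon>0$ there is a strictly positive function $f_\varepsilon\colon X\to(0,\infty)$ such that every $g\colon X\to\mathbb{R}$ with $g(x)\in(-f_\varepsilon(x),f_\varepsilon(x))$ for all $x\in X$ satisfies $\mathcal{E}_p(g)<\varepsilon$. (b) For every $\varepsilon>0$ and every $u\in D^p$ there is $u_\varepsilon\in D^p$ such that $u_\varepsilon(x)\ne u_\varepsilon(y)$ for all $x\ne y$, $\sup_X|u-u_\varepsilon|<\varepsilon$, and $\mathcal{E}_p(u-u_\varepsilon)<\varepsilon$.
   Context: Weighted graph $G=(X,b,m,c)$: $X$ countably infinite; $b$ symmetric, nonnegative, zero on the diagonal, $\sum_yb(x,y)<\infty$; $m>0$; $c\colon X\to[0,\infty)$; $x\sim y$ iff $b(x,y)>0$; $X$ connected. $\mathcal{E}_p(f)=\frac12\sum_{x,y}b(x,y)|f(x)-f(y)|^p+\sum_xc(x)|f(x)|^p$ and $D^p=\{f:\mathcal{E}_p(f)<\infty\}$. *)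

theory Defs
  imports "HOL-Analysis.Analysis"
begin

definition weighted_graph :: "('a \<Rightarrow> 'a \<Rightarrow> real) \<Rightarrow> ('a \<Rightarrow> real) \<Rightarrow> ('a \<Rightarrow> real) \<Rightarrow> bool" where
  "weighted_graph b m c \<longleftrightarrow>
     countable (UNIV :: 'a set) \<and> infinite (UNIV :: 'a set) \<and>
     (\<forall>x y. b x y = b y x) \<and> (\<forall>x y. 0 \<le> b x y) \<and> (\<forall>x. b x x = 0) \<and>
     (\<forall>x. (\<lambda>y. b x y) summable_on UNIV) \<and>
     (\<forall>x. 0 < m x) \<and> (\<forall>x. 0 \<le> c x) \<and>
     (\<forall>x y. (x, y) \<in> {(u, v). 0 < b u v}\<^sup>*)"

definition energy :: "real \<Rightarrow> ('a \<Rightarrow> 'a \<Rightarrow> real) \<Rightarrow> ('a \<Rightarrow> real) \<Rightarrow> ('a \<Rightarrow> real) \<Rightarrow> ennreal" where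
  "energy p b c f =
     ennreal (1/2) * (\<Sum>\<^sub>\<infinity>(x, y)\<in>UNIV. ennreal (b x y * \<bar>f x - f y\<bar> powr p))
     + (\<Sum>\<^sub>\<infinity>x\<in>UNIV. ennreal (c x * \<bar>f x\<bar> powr p))"

definition Dp :: "real \<Rightarrow> ('a \<Rightarrow> 'a \<Rightarrow> real) \<Rightarrow> ('a \<Rightarrow> real) \<Rightarrow> ('a \<Rightarrow> real) set" where
  "Dp p b c = {f. energy p b c f < \<infinity>}"

end

theory Submission
  imports Defs
begin

text \<open>
  (a) If \<open>|g| \<le> f \<le> 1/2\<close> pointwise, then \<open>|g x - g y|^p \<le> f x + f y\<close> and
  \<open>|g x|^p \<le> f x\<close> because \<open>p \<ge> 1\<close>; by the symmetry of \<open>b\<close> the energy of \<open>g\<close> is then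
  at most \<open>\<Sum>\<^sub>x f x (deg x + c x)\<close>. Taking \<open>f x\<close> proportional to
  \<open>w x / (deg x + c x + 1)\<close>, capped at \<open>1/2\<close>, for positive weights \<open>w\<close> of finite total
  mass, which exist because \<open>X\<close> is countable, makes this small.

  (b) Perturb \<open>u\<close> by \<open>t h\<close>, where \<open>h\<close> is injective, positive and below both \<open>\<epsilon>/2\<close>
  and the bound of (a). The function \<open>u - t h\<close> fails to be injective only if \<open>t\<close> is one of
  the countably many slopes \<open>(u x - u y) / (h x - h y)\<close>, so some \<open>t \<in> (0,1)\<close> works;
  \<open>D\<^sup>p\<close> is closed under differences since \<open>|s - t|^p \<le> 2^p (|s|^p + |t|^p)\<close>.
\<close>

lemma powr_le_self:
  fixes s p :: real
  assumes "0 \<le> s" and "s \<le> 1" and "1 \<le> p"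
  shows "s powr p \<le> s"
  using assms powr_le_one_le[of s p] by (cases "s = 0") auto

lemma abs_diff_powr_le:
  fixes s t p :: real
  assumes "0 \<le> p"
  shows "\<bar>s - t\<bar> powr p \<le> 2 powr p * (\<bar>s\<bar> powr p + \<bar>t\<bar> powr p)"
proof -
  define M where "M = max \<bar>s\<bar> \<bar>t\<bar>"
  have "\<bar>s - t\<bar> powr p \<le> (2 * M) powr p"
    unfolding M_def using assms by (intro powr_mono2) auto
  also have "\<dots> = 2 powr p * M powr p"
    unfolding M_def by (simp add: powr_mult)
  also have "M powr p \<le> \<bar>s\<bar> powr p + \<bar>t\<bar> powr p"
    unfolding M_def by (simp add: max_def)
  finally show ?thesis by simp
qed

lemma sum_le_infsum_ennreal:
  fixes f :: "'a \<Rightarrow> ennreal"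
  assumes "finite F" and "F \<subseteq> A"
  shows "sum f F \<le> (\<Sum>\<^sub>\<infinity>x\<in>A. f x)"
  using infsum_mono_neutral[of f F f A] assms by (auto simp: nonneg_summable_on_complete)

lemma infsum_cmult_right_ennreal:
  fixes f :: "'a \<Rightarrow> ennreal"
  assumes "c < \<infinity>"
  shows "(\<Sum>\<^sub>\<infinity>x\<in>A. c * f x) = c * (\<Sum>\<^sub>\<infinity>x\<in>A. f x)"
proof -
  have "isCont (\<lambda>y. c * y) s" for s
    using assms by (simp add: isCont_def ennreal_tendsto_cmult tendsto_ident_at)
  then show ?thesis
    using infsum_comm_additive_general[of A "\<lambda>y. c * y" f] nonneg_summable_on_complete[of A f]
    by (simp add: o_def sum_distrib_left)
qed

lemma infsum_Sigma_le_ennreal: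
  fixes f :: "'a \<Rightarrow> 'b \<Rightarrow> ennreal"
  shows "(\<Sum>\<^sub>\<infinity>(x, y)\<in>A \<times> B. f x y) \<le> (\<Sum>\<^sub>\<infinity>x\<in>A. \<Sum>\<^sub>\<infinity>y\<in>B. f x y)"
proof (rule infsum_le_finite_sums)
  fix F assume F: "finite F" "F \<subseteq> A \<times> B"
  have "(\<Sum>(x, y)\<in>F. f x y) \<le> (\<Sum>(x, y)\<in>fst ` F \<times> snd ` F. f x y)"
    using F by (intro sum_mono2) force+
  also have "\<dots> = (\<Sum>x\<in>fst ` F. \<Sum>y\<in>snd ` F. f x y)"
    by (simp add: sum.cartesian_product)
  also have "\<dots> \<le> (\<Sum>x\<in>fst ` F. \<Sum>\<^sub>\<infinity>y\<in>B. f x y)"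
    using F by (intro sum_mono sum_le_infsum_ennreal) force+
  also have "\<dots> \<le> (\<Sum>\<^sub>\<infinity>x\<in>A. \<Sum>\<^sub>\<infinity>y\<in>B. f x y)"
    using F by (intro sum_le_infsum_ennreal) force+
  finally show "(\<Sum>(x, y)\<in>F. f x y) \<le> (\<Sum>\<^sub>\<infinity>x\<in>A. \<Sum>\<^sub>\<infinity>y\<in>B. f x y)" .
qed (simp add: nonneg_summable_on_complete)

lemma ennreal_infsum:
  fixes f :: "'a \<Rightarrow> real"
  assumes "f summable_on A" and "\<And>x. x \<in> A \<Longrightarrow> 0 \<le> f x"
  shows "ennreal (\<Sum>\<^sub>\<infinity>x\<in>A. f x) = (\<Sum>\<^sub>\<infinity>x\<in>A. ennreal (f x))"
  using infsum_comm_additive_general[of A ennreal f] assms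
  by (simp add: o_def sum_ennreal subset_eq)

lemma countable_pos_weights:
  assumes "countable (UNIV :: 'a set)"
  obtains w :: "'a \<Rightarrow> real" where "\<And>x. 0 < w x" and "(\<Sum>\<^sub>\<infinity>x. ennreal (w x)) \<le> 1"
proof
  define n where "n x = Suc (to_nat_on (UNIV :: 'a set) x)" for x
  have "inj n"
    using inj_on_to_nat_on[OF assms] by (simp add: n_def inj_def)
  then have "(\<Sum>\<^sub>\<infinity>x. ennreal ((1/2) ^ n x)) = (\<Sum>\<^sub>\<infinity>k\<in>range n. ennreal ((1/2) ^ k))"
    by (simp add: infsum_reindex o_def)
  also have "\<dots> \<le> (\<Sum>\<^sub>\<infinity>k\<in>{1..}. ennreal ((1/2) ^ k))"
    by (intro infsum_mono_neutral) (auto simp: n_def nonneg_summable_on_complete)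
  also have "\<dots> = ennreal (\<Sum>\<^sub>\<infinity>k\<in>{1..}. (1/2) ^ k)"
    using has_sum_geometric_from_1[of "1/2::real"] by (subst ennreal_infsum) (auto simp: summable_on_def)
  also have "\<dots> = 1"
    using has_sum_geometric_from_1[of "1/2::real"] by (simp add: infsumI)
  finally show "(\<Sum>\<^sub>\<infinity>x. ennreal ((1/2) ^ n x)) \<le> 1" .
qed simp

lemma countable_inj_pos_below:
  fixes r :: "'a \<Rightarrow> real"
  assumes "countable (UNIV :: 'a set)" and r: "\<And>x. 0 < r x"
  obtains h :: "'a \<Rightarrow> real" where "inj h" and "\<And>x. 0 < h x" and "\<And>x. h x < r x"
proof -
  have "\<forall>x. \<exists>n. (1/2::real) ^ n < r x"
    using real_arch_pow_inv r by simp
  then obtain n :: "'a \<Rightarrow> nat" where n: "\<And>x. (1/2::real) ^ n x < r x"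
    by (auto dest!: choice)
  define k where "k x = prod_encode (to_nat_on (UNIV :: 'a set) x, n x)" for x
  have "inj k"
    using inj_on_to_nat_on[OF assms(1)] by (auto simp: k_def inj_def prod_encode_eq)
  show ?thesis
  proof
    show "inj (\<lambda>x. (1/2::real) ^ k x)"
      using \<open>inj k\<close> by (simp add: inj_def power_inject_exp')
    show "(1/2::real) ^ k x < r x" for x
    proof -
      have "(1/2::real) ^ k x \<le> (1/2) ^ n x"
        unfolding k_def by (rule power_decreasing) (auto simp: le_prod_encode_2)
      with n[of x] show ?thesis
        by linarith
    qed
  qed simp
qed

lemma countable_inj_perturbation:
  fixes h u :: "'a \<Rightarrow> real"
  assumes "countable (UNIV :: 'a set)" and "inj h"
  obtains t :: real where "0 < t" and "t < 1" and "inj (\<lambda>x. u x - t * h x)"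
proof -
  define slopes where "slopes = (\<lambda>(x, y). (u x - u y) / (h x - h y)) ` UNIV"
  have "countable (UNIV \<times> UNIV :: ('a \<times> 'a) set)"
    using assms(1) by (blast intro: countable_SIGMA)
  then have "countable slopes"
    unfolding slopes_def by simp
  then have "\<not> {0<..<1} \<subseteq> slopes"
    using countable_subset uncountable_open_interval[of "0::real" 1] by auto
  then obtain t where t: "0 < t" "t < 1" "t \<notin> slopes"
    by (auto simp: subset_eq)
  have "inj (\<lambda>x. u x - t * h x)"
  proof (rule injI, rule ccontr)
    fix x y assume eq: "u x - t * h x = u y - t * h y" and "x \<noteq> y"
    then have "h x \<noteq> h y"
      using \<open>inj h\<close> by (auto dest: injD)
    with eq have "t = (u x - u y) / (h x - h y)"
      by (simp add: field_simps)
    then show False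
      using t(3) unfolding slopes_def by auto
  qed
  with t show ?thesis
    using that by blast
qed

lemma infsum_sym_weight_le_degree:
  fixes b :: "'a \<Rightarrow> 'a \<Rightarrow> real" and f :: "'a \<Rightarrow> real"
  assumes sym: "\<And>x y. b x y = b y x" and b: "\<And>x y. 0 \<le> b x y" and f: "\<And>x. 0 \<le> f x"
  shows "(\<Sum>\<^sub>\<infinity>(x, y)\<in>UNIV. ennreal (b x y * (f x + f y)))
           \<le> 2 * (\<Sum>\<^sub>\<infinity>x. ennreal (f x) * (\<Sum>\<^sub>\<infinity>y. ennreal (b x y)))"
proof -
  define S where "S = (\<Sum>\<^sub>\<infinity>(x, y)\<in>UNIV. ennreal (f x * b x y))"
  have swap: "(\<Sum>\<^sub>\<infinity>(x, y)\<in>UNIV. ennreal (f y * b x y)) = S"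
    unfolding S_def
    using infsum_reindex_bij_betw[of prod.swap UNIV UNIV "\<lambda>(x, y). ennreal (f x * b x y)"]
    by (simp add: sym case_prod_unfold)
  have "(\<Sum>\<^sub>\<infinity>(x, y)\<in>UNIV. ennreal (b x y * (f x + f y)))
      = (\<Sum>\<^sub>\<infinity>(x, y)\<in>UNIV. ennreal (f x * b x y) + ennreal (f y * b x y))"
    using b f by (simp add: algebra_simps flip: ennreal_plus)
  also have "\<dots> = S + S"
    using infsum_add[of "\<lambda>(x, y). ennreal (f x * b x y)" UNIV "\<lambda>(x, y). ennreal (f y * b x y)"] swap
    by (simp add: S_def nonneg_summable_on_complete split_def)
  also have "S \<le> (\<Sum>\<^sub>\<infinity>x. \<Sum>\<^sub>\<infinity>y. ennreal (f x * b x y))"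
    unfolding S_def using infsum_Sigma_le_ennreal[of "\<lambda>x y. ennreal (f x * b x y)" UNIV UNIV] by simp
  also have "\<dots> = (\<Sum>\<^sub>\<infinity>x. ennreal (f x) * (\<Sum>\<^sub>\<infinity>y. ennreal (b x y)))"
    using f b by (simp add: ennreal_mult infsum_cmult_right_ennreal)
  finally show ?thesis
    by (simp add: mult_2 add_mono)
qed

lemma energy_le_weighted_degree:
  fixes b :: "'a \<Rightarrow> 'a \<Rightarrow> real" and c f g :: "'a \<Rightarrow> real"
  assumes p: "1 \<le> p" and sym: "\<And>x y. b x y = b y x" and b: "\<And>x y. 0 \<le> b x y"
    and summable: "\<And>x. b x summable_on UNIV" and c: "\<And>x. 0 \<le> c x"
    and g: "\<And>x. \<bar>g x\<bar> \<le> f x" and f: "\<And>x. f x \<le> 1/2"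
  shows "energy p b c g \<le> (\<Sum>\<^sub>\<infinity>x. ennreal (f x * ((\<Sum>\<^sub>\<infinity>y. b x y) + c x)))"
proof -
  define D where "D = (\<Sum>\<^sub>\<infinity>x. ennreal (f x) * (\<Sum>\<^sub>\<infinity>y. ennreal (b x y)))"
  have f_nonneg: "0 \<le> f x" for x
    using g[of x] by linarith
  have edge: "b x y * \<bar>g x - g y\<bar> powr p \<le> b x y * (f x + f y)" for x y
  proof -
    have "\<bar>g x - g y\<bar> \<le> f x + f y" and "f x + f y \<le> 1"
      using g[of x] g[of y] f[of x] f[of y] by linarith+
    then have "\<bar>g x - g y\<bar> powr p \<le> f x + f y"
      using powr_le_self[OF _ _ p, of "\<bar>g x - g y\<bar>"] by linarith
    then show ?thesis
      using b[of x y] by (rule mult_left_mono)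
  qed
  have node: "c x * \<bar>g x\<bar> powr p \<le> f x * c x" for x
  proof -
    have "\<bar>g x\<bar> powr p \<le> f x"
      using g[of x] f[of x] powr_le_self[OF _ _ p, of "\<bar>g x\<bar>"] by linarith
    then show ?thesis
      using c[of x] by (simp add: mult_left_mono mult.commute)
  qed
  have "(\<Sum>\<^sub>\<infinity>(x, y)\<in>UNIV. ennreal (b x y * \<bar>g x - g y\<bar> powr p))
      \<le> (\<Sum>\<^sub>\<infinity>(x, y)\<in>UNIV. ennreal (b x y * (f x + f y)))"
    using edge by (intro infsum_mono) (auto simp: nonneg_summable_on_complete intro: ennreal_leI)
  also have "\<dots> \<le> 2 * D"
    unfolding D_def using sym b f_nonneg by (rule infsum_sym_weight_le_degree)
  finally have edges: "(\<Sum>\<^sub>\<infinity>(x, y)\<in>UNIV. ennreal (b x y * \<bar>g x - g y\<bar> powr p)) \<le> 2 * D" .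
  have nodes: "(\<Sum>\<^sub>\<infinity>x. ennreal (c x * \<bar>g x\<bar> powr p)) \<le> (\<Sum>\<^sub>\<infinity>x. ennreal (f x) * ennreal (c x))"
    using node f_nonneg c
    by (intro infsum_mono) (auto simp: nonneg_summable_on_complete simp flip: ennreal_mult intro: ennreal_leI)
  have "energy p b c g \<le> ennreal (1/2) * (2 * D) + (\<Sum>\<^sub>\<infinity>x. ennreal (f x) * ennreal (c x))"
    unfolding energy_def using edges nodes by (intro add_mono mult_left_mono) auto
  also have "ennreal (1/2) * (2 * D) = D"
    using ennreal_mult[of "1/2" 2] by (simp add: mult.assoc[symmetric])
  also have "D + (\<Sum>\<^sub>\<infinity>x. ennreal (f x) * ennreal (c x))
      = (\<Sum>\<^sub>\<infinity>x. ennreal (f x) * ((\<Sum>\<^sub>\<infinity>y. ennreal (b x y)) + ennreal (c x)))"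
    unfolding D_def by (simp add: distrib_left infsum_add nonneg_summable_on_complete)
  also have "\<dots> = (\<Sum>\<^sub>\<infinity>x. ennreal (f x * ((\<Sum>\<^sub>\<infinity>y. b x y) + c x)))"
    using summable b c f_nonneg
    by (simp add: ennreal_infsum infsum_nonneg ennreal_mult ennreal_plus)
  finally show ?thesis .
qed

lemma ex_pos_radius_small_energy:
  fixes b :: "'a \<Rightarrow> 'a \<Rightarrow> real" and c :: "'a \<Rightarrow> real"
  assumes "countable (UNIV :: 'a set)" and p: "1 \<le> p"
    and sym: "\<And>x y. b x y = b y x" and b: "\<And>x y. 0 \<le> b x y"
    and summable: "\<And>x. b x summable_on UNIV" and c: "\<And>x. 0 \<le> c x" and "0 < \<epsilon>"
  shows "\<exists>f. (\<forall>x. 0 < f x) \<and> (\<forall>g. (\<forall>x. \<bar>g x\<bar> \<le> f x) \<longrightarrow> energy p b c g < ennreal \<epsilon>)"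
proof -
  obtain w :: "'a \<Rightarrow> real" where w: "\<And>x. 0 < w x" and w_sum: "(\<Sum>\<^sub>\<infinity>x. ennreal (w x)) \<le> 1"
    using countable_pos_weights[OF assms(1)] by blast
  define d where "d x = (\<Sum>\<^sub>\<infinity>y. b x y)" for x
  define f where "f x = min (1/2) (\<epsilon>/2 * w x / (d x + c x + 1))" for x
  have d: "0 \<le> d x" for x
    unfolding d_def using b by (simp add: infsum_nonneg)
  have f_pos: "0 < f x" for x
    unfolding f_def using w[of x] d[of x] c[of x] \<open>0 < \<epsilon>\<close> by simp
  have f_half: "f x \<le> 1/2" for x
    unfolding f_def by (rule min.cobounded1)
  have f_degree: "f x * (d x + c x) \<le> \<epsilon>/2 * w x" for x
  proof -
    have pos: "0 < d x + c x + 1"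
      using d[of x] c[of x] by linarith
    have "f x \<le> \<epsilon>/2 * w x / (d x + c x + 1)"
      by (simp add: f_def)
    then have "f x * (d x + c x + 1) \<le> \<epsilon>/2 * w x"
      by (rule pos_le_divide_eq[OF pos, THEN iffD1])
    then show ?thesis
      using f_pos[of x] by (simp add: algebra_simps)
  qed
  have "energy p b c g < ennreal \<epsilon>" if g: "\<forall>x. \<bar>g x\<bar> \<le> f x" for g
  proof -
    have "energy p b c g \<le> (\<Sum>\<^sub>\<infinity>x. ennreal (f x * (d x + c x)))"
      unfolding d_def
      using energy_le_weighted_degree[where b = b and c = c, OF p sym b summable c g[rule_format] f_half] .
    also have "\<dots> \<le> (\<Sum>\<^sub>\<infinity>x. ennreal (\<epsilon>/2 * w x))"
      using f_degree by (intro infsum_mono) (auto simp: nonneg_summable_on_complete intro: ennreal_leI)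
    also have "\<dots> = ennreal (\<epsilon>/2) * (\<Sum>\<^sub>\<infinity>x. ennreal (w x))"
      using w \<open>0 < \<epsilon>\<close> ennreal_mult[of "\<epsilon>/2"]
      by (simp add: infsum_cmult_right_ennreal less_imp_le del: times_divide_eq_left)
    also have "\<dots> \<le> ennreal (\<epsilon>/2)"
      using mult_left_mono[OF w_sum, of "ennreal (\<epsilon>/2)"] by simp
    also have "\<dots> < ennreal \<epsilon>"
      using \<open>0 < \<epsilon>\<close> by (simp add: ennreal_lessI)
    finally show ?thesis .
  qed
  with f_pos show ?thesis
    by blast
qed

lemma energy_diff_le:
  fixes b :: "'a \<Rightarrow> 'a \<Rightarrow> real" and c u g :: "'a \<Rightarrow> real"
  assumes p: "0 \<le> p" and b: "\<And>x y. 0 \<le> b x y" and c: "\<And>x. 0 \<le> c x"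
  shows "energy p b c (\<lambda>x. u x - g x) \<le> ennreal (2 powr p) * (energy p b c u + energy p b c g)"
proof -
  define K where "K = ennreal (2 powr p)"
  have edge: "ennreal (b x y * \<bar>u x - g x - (u y - g y)\<bar> powr p)
      \<le> K * (ennreal (b x y * \<bar>u x - u y\<bar> powr p) + ennreal (b x y * \<bar>g x - g y\<bar> powr p))" for x y
  proof -
    have "\<bar>(u x - u y) - (g x - g y)\<bar> powr p \<le> 2 powr p * (\<bar>u x - u y\<bar> powr p + \<bar>g x - g y\<bar> powr p)"
      by (rule abs_diff_powr_le[OF p])
    from mult_left_mono[OF this b[of x y]] show ?thesis
      unfolding K_def using b[of x y]
      by (simp add: algebra_simps ennreal_leI flip: ennreal_plus ennreal_mult)
  qed
  have node: "ennreal (c x * \<bar>u x - g x\<bar> powr p)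
      \<le> K * (ennreal (c x * \<bar>u x\<bar> powr p) + ennreal (c x * \<bar>g x\<bar> powr p))" for x
  proof -
    from mult_left_mono[OF abs_diff_powr_le[OF p, of "u x" "g x"] c[of x]] show ?thesis
      unfolding K_def using c[of x]
      by (simp add: algebra_simps ennreal_leI flip: ennreal_plus ennreal_mult)
  qed
  have "energy p b c (\<lambda>x. u x - g x)
      \<le> ennreal (1/2) * (\<Sum>\<^sub>\<infinity>(x, y)\<in>UNIV. K * (ennreal (b x y * \<bar>u x - u y\<bar> powr p) + ennreal (b x y * \<bar>g x - g y\<bar> powr p)))
        + (\<Sum>\<^sub>\<infinity>x. K * (ennreal (c x * \<bar>u x\<bar> powr p) + ennreal (c x * \<bar>g x\<bar> powr p)))"
    unfolding energy_def using edge node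
    by (intro add_mono mult_left_mono infsum_mono) (auto simp: nonneg_summable_on_complete)
  also have "\<dots> = K * (energy p b c u + energy p b c g)"
    unfolding energy_def K_def
    by (simp add: infsum_cmult_right_ennreal infsum_add nonneg_summable_on_complete split_def algebra_simps)
  finally show ?thesis
    unfolding K_def .
qed

lemma Dp_diff:
  fixes b :: "'a \<Rightarrow> 'a \<Rightarrow> real" and c u g :: "'a \<Rightarrow> real"
  assumes "0 \<le> p" and "\<And>x y. 0 \<le> b x y" and "\<And>x. 0 \<le> c x"
    and "u \<in> Dp p b c" and "g \<in> Dp p b c"
  shows "(\<lambda>x. u x - g x) \<in> Dp p b c"
proof -
  have "energy p b c (\<lambda>x. u x - g x) \<le> ennreal (2 powr p) * (energy p b c u + energy p b c g)"
    using assms(1-3) by (rule energy_diff_le)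
  also have "\<dots> < \<infinity>"
    using assms(4,5) by (simp add: Dp_def ennreal_mult_less_top)
  finally show ?thesis
    by (simp add: Dp_def)
qed

lemma Dp_ex_inj_approximation:
  fixes b :: "'a \<Rightarrow> 'a \<Rightarrow> real" and c u f :: "'a \<Rightarrow> real"
  assumes "countable (UNIV :: 'a set)" and p: "0 \<le> p"
    and b: "\<And>x y. 0 \<le> b x y" and c: "\<And>x. 0 \<le> c x" and u: "u \<in> Dp p b c" and "0 < \<epsilon>"
    and f: "\<forall>x. 0 < f x" and small: "\<forall>g. (\<forall>x. \<bar>g x\<bar> \<le> f x) \<longrightarrow> energy p b c g < ennreal \<epsilon>"
  shows "\<exists>u\<epsilon> \<in> Dp p b c. (\<forall>x y. x \<noteq> y \<longrightarrow> u\<epsilon> x \<noteq> u\<epsilon> y) \<and>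
           (SUP x. ereal \<bar>u x - u\<epsilon> x\<bar>) < ereal \<epsilon> \<and> energy p b c (\<lambda>x. u x - u\<epsilon> x) < ennreal \<epsilon>"
proof -
  obtain h where "inj h" and h_pos: "\<And>x. 0 < h x" and h_less: "\<And>x. h x < min (f x) (\<epsilon>/2)"
    using countable_inj_pos_below[OF assms(1), of "\<lambda>x. min (f x) (\<epsilon>/2)"] f \<open>0 < \<epsilon>\<close> by auto
  obtain t where t: "0 < t" "t < 1" and inj: "inj (\<lambda>x. u x - t * h x)"
    using countable_inj_perturbation[OF assms(1) \<open>inj h\<close>] by blast
  have th: "\<bar>t * h x\<bar> \<le> h x" for x
    using t h_pos[of x] by (simp add: abs_mult)
  have th_f: "\<bar>t * h x\<bar> \<le> f x" for x
    using th[of x] h_less[of x] by simp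
  have energy_th: "energy p b c (\<lambda>x. t * h x) < ennreal \<epsilon>"
    using spec[OF small, of "\<lambda>x. t * h x"] th_f by simp
  then have "(\<lambda>x. t * h x) \<in> Dp p b c"
    unfolding Dp_def using less_trans[OF energy_th ennreal_less_top] by simp
  then have "(\<lambda>x. u x - t * h x) \<in> Dp p b c"
    using Dp_diff[OF p b c u] by blast
  moreover have "(SUP x. ereal \<bar>t * h x\<bar>) < ereal \<epsilon>"
  proof -
    have "(SUP x. ereal \<bar>t * h x\<bar>) \<le> ereal (\<epsilon>/2)"
    proof (rule SUP_least)
      show "ereal \<bar>t * h x\<bar> \<le> ereal (\<epsilon>/2)" for x
        using th[of x] h_less[of x] by simp
    qed
    also have "\<dots> < ereal \<epsilon>"
      using \<open>0 < \<epsilon>\<close> by simp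
    finally show ?thesis .
  qed
  ultimately show ?thesis
    using inj energy_th by (intro bexI[where x = "\<lambda>x. u x - t * h x"]) (auto simp: inj_def)
qed

theorem lemma3p13:
  fixes b :: "'a \<Rightarrow> 'a \<Rightarrow> real" and m c :: "'a \<Rightarrow> real" and p :: real
  assumes "weighted_graph b m c" and "1 \<le> p"
  shows "(\<forall>\<epsilon>>0. \<exists>f :: 'a \<Rightarrow> real. (\<forall>x. 0 < f x) \<and>
            (\<forall>g :: 'a \<Rightarrow> real. (\<forall>x. - f x < g x \<and> g x < f x) \<longrightarrow> energy p b c g < ennreal \<epsilon>))
       \<and> (\<forall>\<epsilon>>0. \<forall>u \<in> Dp p b c. \<exists>u\<epsilon> \<in> Dp p b c.
            (\<forall>x y. x \<noteq> y \<longrightarrow> u\<epsilon> x \<noteq> u\<epsilon> y) \<and>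
            (SUP x. ereal \<bar>u x - u\<epsilon> x\<bar>) < ereal \<epsilon> \<and>
            energy p b c (\<lambda>x. u x - u\<epsilon> x) < ennreal \<epsilon>)"
proof -
  have countable: "countable (UNIV :: 'a set)" and sym: "\<And>x y. b x y = b y x"
    and b: "\<And>x y. 0 \<le> b x y" and summable: "\<And>x. b x summable_on UNIV" and c: "\<And>x. 0 \<le> c x"
    using assms(1) unfolding weighted_graph_def by auto
  note small_energy =
    ex_pos_radius_small_energy[where b = b and c = c, OF countable assms(2) sym b summable c]
  show ?thesis
  proof (intro conjI allI impI ballI)
    fix \<epsilon> :: real assume "0 < \<epsilon>"
    then obtain f where "\<forall>x. 0 < f x"
      and "\<forall>g. (\<forall>x. \<bar>g x\<bar> \<le> f x) \<longrightarrow> energy p b c g < ennreal \<epsilon>"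
      using small_energy by blast
    then show "\<exists>f. (\<forall>x. 0 < f x) \<and>
        (\<forall>g. (\<forall>x. - f x < g x \<and> g x < f x) \<longrightarrow> energy p b c g < ennreal \<epsilon>)"
      by (meson abs_le_iff less_imp_le minus_less_iff)
  next
    fix \<epsilon> :: real and u assume "0 < \<epsilon>" and "u \<in> Dp p b c"
    then obtain f where "\<forall>x. 0 < f x"
      and "\<forall>g. (\<forall>x. \<bar>g x\<bar> \<le> f x) \<longrightarrow> energy p b c g < ennreal \<epsilon>"
      using small_energy by blast
    with countable assms(2) b c \<open>0 < \<epsilon>\<close> \<open>u \<in> Dp p b c\<close>
    show "\<exists>u\<epsilon> \<in> Dp p b c. (\<forall>x y. x \<noteq> y \<longrightarrow> u\<epsilon> x \<noteq> u\<epsilon> y) \<and>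
        (SUP x. ereal \<bar>u x - u\<epsilon> x\<bar>) < ereal \<epsilon> \<and> energy p b c (\<lambda>x. u x - u\<epsilon> x) < ennreal \<epsilon>"
      by (intro Dp_ex_inj_approximation[where f = f]) auto
  qed
qed

end
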